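(* Let $p,q$ be coprime positive integers. Then $E(p,q)=d_c(e^{2\pi i/3},p/q)$.
   Context: Hyperbolic plane is modelled on the upper half-plane $\{\operatorname{Im}z>0\}$ with absolute $\mathbb R\cup\{\infty\}$. The Farey tesselation consists of the hyperbolic geodesics joining $m/n$ and $p'/q'$ (integers, $\infty=1/0$) with $|mq'-np'|=1$; it tesselates the plane into ideal triangles. For a point $z$ not on any Farey line and a rational (or $\infty$) absolute point $r$, $d_c(z,r)$ is the number of Farey lines that intersect the geodesic ray from $z$ to $r$. For coprime positive integers $p,q$, the Euclid complexity $E(p,q)$ is the number of subtractions in the subtractive Euclid algorithm converting the pair $(p,q)$ into $(0,1)$, i.e. the sum of the partial quotients of the continued fraction of $p/q$. *)

theory Defs
  imports Complex_Main
begin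

text \<open>Upper half-plane model. Absolute points are rationals m/n with n = 0 meaning infinity.\<close>

definition farey_line :: "int \<Rightarrow> int \<Rightarrow> int \<Rightarrow> int \<Rightarrow> complex set" where
  "farey_line m n p q =
     (if n = 0 then {z. 0 < Im z \<and> Re z = real_of_int p / real_of_int q}
      else if q = 0 then {z. 0 < Im z \<and> Re z = real_of_int m / real_of_int n}
      else {z. 0 < Im z \<and>
               cmod (z - complex_of_real ((real_of_int m / real_of_int n + real_of_int p / real_of_int q) / 2))
                 = \<bar>real_of_int m / real_of_int n - real_of_int p / real_of_int q\<bar> / 2})"

definition farey_lines :: "complex set set" where
  "farey_lines = {farey_line m n p q | m n p q. \<bar>m * q - n * p\<bar> = 1}"

definition geo_ray :: "complex \<Rightarrow> real \<Rightarrow> complex set" where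
  "geo_ray z r =
     (if Re z = r then {w. Re w = r \<and> 0 < Im w \<and> Im w \<le> Im z}
      else (let c = ((cmod z)\<^sup>2 - r\<^sup>2) / (2 * (Re z - r)) in
            {w. 0 < Im w \<and> cmod (w - complex_of_real c) = \<bar>r - c\<bar> \<and>
                min (Re z) r \<le> Re w \<and> Re w \<le> max (Re z) r}))"

definition d_c :: "complex \<Rightarrow> real \<Rightarrow> nat" where
  "d_c z r = card {L \<in> farey_lines. L \<inter> geo_ray z r \<noteq> {}}"

function euclid_sub :: "nat \<Rightarrow> nat \<Rightarrow> nat" where
  "euclid_sub p q =
     (if p = 0 \<or> q = 0 then 0
      else if q \<le> p then Suc (euclid_sub (p - q) q)
      else Suc (euclid_sub p (q - p)))"
  by pat_completeness auto
termination by (relation "measure (\<lambda>(p, q). p + q)") auto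

end

theory Submission
  imports Defs
begin

(* Let \<omega> = exp (2 \<pi> i / 3) and r = p / q. The geodesic ray from \<omega> to r lies on a circle, and
   along it the power of a point with respect to a Farey semicircle with endpoints a < b is an
   affine function of the real part: positive at \<omega> (because b - a \<le> 1) and equal to
   (r - a) (r - b) at r. Hence the Farey lines met by the ray are the vertical lines Re z = k with
   0 \<le> k < r and the semicircles whose endpoints bracket r. Written as reduced fractions
   u1/u2 < v1/v2 with u1 v2 - u2 v1 = -1, the brackets of p/q other than (0, \<infinity>) are the
   images of the brackets of (p - q)/q under x \<mapsto> x + 1 if q \<le> p, and of those of p/(q - p)
   under x \<mapsto> x/(x + 1) if p \<le> q: one step of the subtractive Euclidean algorithm. *)

definition vertical_line :: "real \<Rightarrow> complex set" where
  "vertical_line k = {w. 0 < Im w \<and> Re w = k}"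

definition circle_power :: "real \<Rightarrow> real \<Rightarrow> complex \<Rightarrow> real" where
  "circle_power a b w = (Re w - a) * (Re w - b) + (Im w)\<^sup>2"

definition semicircle :: "real \<Rightarrow> real \<Rightarrow> complex set" where
  "semicircle a b = {w. 0 < Im w \<and> circle_power a b w = 0}"

lemma Re_vertical_line: "Re ` vertical_line k = {k}"
proof -
  have "Complex k 1 \<in> vertical_line k" by (simp add: vertical_line_def)
  then have "k \<in> Re ` vertical_line k" by (rule image_eqI[rotated]) simp
  then show ?thesis by (auto simp: vertical_line_def)
qed

lemma Re_semicircle:
  assumes "a < b"
  shows "Re ` semicircle a b = {a<..<b}"
proof
  show "Re ` semicircle a b \<subseteq> {a<..<b}"
  proof
    fix x assume "x \<in> Re ` semicircle a b"
    then obtain w where w: "0 < Im w" "(Re w - a) * (Re w - b) = - (Im w)\<^sup>2" "x = Re w"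
      by (auto simp: semicircle_def circle_power_def algebra_simps)
    then have "(x - a) * (x - b) < 0" by simp
    then show "x \<in> {a<..<b}" using assms by (auto simp: mult_less_0_iff)
  qed
  show "{a<..<b} \<subseteq> Re ` semicircle a b"
  proof
    fix x assume x: "x \<in> {a<..<b}"
    then have pos: "0 < (x - a) * (b - x)" by simp
    define w where "w = Complex x (sqrt ((x - a) * (b - x)))"
    have "w \<in> semicircle a b"
      using pos by (simp add: w_def semicircle_def circle_power_def algebra_simps)
    then show "x \<in> Re ` semicircle a b" by (rule image_eqI[rotated]) (simp add: w_def)
  qed
qed

definition geo_centre :: "complex \<Rightarrow> real \<Rightarrow> real" where
  "geo_centre z r = ((cmod z)\<^sup>2 - r\<^sup>2) / (2 * (Re z - r))"

lemma geo_ray_eq: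
  assumes "Re z < r"
  shows "geo_ray z r = {w. 0 < Im w \<and> (Re w - geo_centre z r)\<^sup>2 + (Im w)\<^sup>2 = (r - geo_centre z r)\<^sup>2
                          \<and> Re z \<le> Re w \<and> Re w \<le> r}"
proof -
  have "cmod (w - of_real c) = \<bar>r - c\<bar> \<longleftrightarrow> (cmod (w - of_real c))\<^sup>2 = (r - c)\<^sup>2" for w c
    by (metis abs_ge_zero norm_ge_zero power2_abs power2_eq_iff_nonneg)
  then have "cmod (w - of_real c) = \<bar>r - c\<bar> \<longleftrightarrow> (Re w - c)\<^sup>2 + (Im w)\<^sup>2 = (r - c)\<^sup>2" for w c
    by (simp add: cmod_power2)
  then show ?thesis
    using assms by (auto simp: geo_ray_def geo_centre_def Let_def)
qed

lemma geo_centre_circle: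
  assumes "Re z \<noteq> r"
  shows "(Re z - geo_centre z r)\<^sup>2 + (Im z)\<^sup>2 = (r - geo_centre z r)\<^sup>2"
proof -
  define c where "c = geo_centre z r"
  have "2 * (Re z - r) * c = (Re z)\<^sup>2 + (Im z)\<^sup>2 - r\<^sup>2"
    using assms unfolding c_def geo_centre_def cmod_power2 by simp
  then show ?thesis unfolding c_def[symmetric] by algebra
qed

lemma Re_geo_ray:
  assumes "Re z < r" and "0 < Im z"
  shows "Re ` geo_ray z r = {Re z..<r}"
proof
  define c where "c = geo_centre z r"
  have z_circle: "(Re z - c)\<^sup>2 + (Im z)\<^sup>2 = (r - c)\<^sup>2"
    unfolding c_def using assms(1) by (intro geo_centre_circle) simp
  show "Re ` geo_ray z r \<subseteq> {Re z..<r}"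
  proof
    fix x assume "x \<in> Re ` geo_ray z r"
    then obtain w where w: "0 < Im w" "(Re w - c)\<^sup>2 + (Im w)\<^sup>2 = (r - c)\<^sup>2"
        "Re z \<le> Re w" "Re w \<le> r" "x = Re w"
      using assms(1) by (auto simp: geo_ray_eq c_def)
    have "Re w \<noteq> r" using w(1,2) by auto
    then show "x \<in> {Re z..<r}" using w(3-5) by simp
  qed
  show "{Re z..<r} \<subseteq> Re ` geo_ray z r"
  proof
    fix x assume x: "x \<in> {Re z..<r}"
    have "0 < (Im z)\<^sup>2" using assms(2) by simp
    then have "(Re z - c)\<^sup>2 < (r - c)\<^sup>2" using z_circle by linarith
    then have "\<bar>Re z - c\<bar> < \<bar>r - c\<bar>" by (meson abs_le_square_iff not_le)
    then have "\<bar>x - c\<bar> < \<bar>r - c\<bar>" using x assms(1) by auto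
    then have inside: "(x - c)\<^sup>2 < (r - c)\<^sup>2" by (meson abs_le_square_iff not_le)
    define w where "w = Complex x (sqrt ((r - c)\<^sup>2 - (x - c)\<^sup>2))"
    have "w \<in> geo_ray z r"
      using inside x assms(1) by (simp add: geo_ray_eq w_def c_def[symmetric])
    then show "x \<in> Re ` geo_ray z r" by (rule image_eqI[rotated]) (simp add: w_def)
  qed
qed

lemma geo_ray_meets_vertical_line_iff:
  assumes "Re z < r" and "0 < Im z"
  shows "geo_ray z r \<inter> vertical_line k \<noteq> {} \<longleftrightarrow> Re z \<le> k \<and> k < r"
proof -
  have "geo_ray z r \<inter> vertical_line k \<noteq> {} \<longleftrightarrow> k \<in> Re ` geo_ray z r"
    using assms(1) by (auto simp: geo_ray_eq vertical_line_def)
  then show ?thesis using Re_geo_ray[OF assms] by simp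
qed

lemma affine_root_in_interval_iff:
  fixes \<alpha> \<beta> s t :: real
  assumes "s < t" and "0 < \<alpha> + \<beta> * s"
  shows "(\<exists>x\<in>{s..<t}. \<alpha> + \<beta> * x = 0) \<longleftrightarrow> \<alpha> + \<beta> * t < 0"
proof
  assume "\<exists>x\<in>{s..<t}. \<alpha> + \<beta> * x = 0"
  then obtain x where x: "s \<le> x" "x < t" "\<alpha> + \<beta> * x = 0" by auto
  then have "\<beta> * (x - s) < 0" using assms(2) by (simp add: algebra_simps)
  then have "\<beta> < 0" using x(1) by (simp add: mult_less_0_iff)
  then have "\<beta> * t < \<beta> * x" using x(2) by simp
  then show "\<alpha> + \<beta> * t < 0" using x(3) by linarith
next
  assume neg: "\<alpha> + \<beta> * t < 0"
  have "\<beta> * (t - s) < 0" using neg assms(2) by (simp add: algebra_simps)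
  then have "\<beta> < 0" using assms(1) by (simp add: mult_less_0_iff)
  then have "s \<le> - \<alpha> / \<beta>" "- \<alpha> / \<beta> < t" "\<alpha> + \<beta> * (- \<alpha> / \<beta>) = 0"
    using assms(2) neg by (simp_all add: field_simps)
  then show "\<exists>x\<in>{s..<t}. \<alpha> + \<beta> * x = 0" by (intro bexI[of _ "- \<alpha> / \<beta>"]) auto
qed

text \<open>On the geodesic circle through z the power with respect to the circle on [a, b] is affine
  in Re w (the quadratic terms cancel, as for a radical axis), so it vanishes on the ray iff it
  changes sign between the endpoints z and r.\<close>
lemma geo_ray_meets_semicircle_iff:
  assumes "Re z < r" and "0 < Im z" and "0 < circle_power a b z"
  shows "geo_ray z r \<inter> semicircle a b \<noteq> {} \<longleftrightarrow> (r - a) * (r - b) < 0"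
proof -
  define c where "c = geo_centre z r"
  define \<alpha> where "\<alpha> = a * b + (r - c)\<^sup>2 - c\<^sup>2"
  define \<beta> where "\<beta> = 2 * c - a - b"
  have affine: "(x - a) * (x - b) + (r - c)\<^sup>2 - (x - c)\<^sup>2 = \<alpha> + \<beta> * x" for x
    unfolding \<alpha>_def \<beta>_def by (simp add: power2_eq_square algebra_simps)
  have power_on_ray: "circle_power a b w = \<alpha> + \<beta> * Re w" if "w \<in> geo_ray z r" for w
    using that assms(1) affine[of "Re w"]
    by (simp add: geo_ray_eq circle_power_def c_def[symmetric] algebra_simps)
  have "z \<in> geo_ray z r"
    using assms(1,2) geo_centre_circle[of z r] by (simp add: geo_ray_eq)
  then have start: "0 < \<alpha> + \<beta> * Re z" using assms(3) power_on_ray by simp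
  have "geo_ray z r \<inter> semicircle a b \<noteq> {} \<longleftrightarrow> (\<exists>x\<in>Re ` geo_ray z r. \<alpha> + \<beta> * x = 0)"
    using power_on_ray assms(1) by (auto simp: semicircle_def geo_ray_eq)
  also have "\<dots> \<longleftrightarrow> \<alpha> + \<beta> * r < 0"
    unfolding Re_geo_ray[OF assms(1,2)] using assms(1) start by (rule affine_root_in_interval_iff)
  also have "\<alpha> + \<beta> * r = (r - a) * (r - b)" using affine[of r] by simp
  finally show ?thesis .
qed

lemma exp_two_pi_i_div_three: "exp (2 * pi * \<i> / 3) = Complex (-1/2) (sqrt 3 / 2)"
proof -
  have "exp (2 * pi * \<i> / 3) = cis (2 * pi / 3)"
    by (simp add: cis_conv_exp mult.commute)
  then show ?thesis by (simp add: complex_eq_iff cos_120 sin_120)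
qed

lemma circle_power_omega_pos:
  assumes "\<bar>a - b\<bar> \<le> 1"
  shows "0 < circle_power a b (Complex (-1/2) (sqrt 3 / 2))"
proof -
  have "(a - b)\<^sup>2 \<le> 1" using assms by (simp add: abs_square_le_1)
  moreover have "0 \<le> (a + b + 1)\<^sup>2" by simp
  ultimately have "0 < (a + b + 1)\<^sup>2 - (a - b)\<^sup>2 + 3" by linarith
  then have "0 < ((a + b + 1)\<^sup>2 - (a - b)\<^sup>2 + 3) / 4" by simp
  also have "\<dots> = circle_power a b (Complex (-1/2) (sqrt 3 / 2))"
    by (simp add: circle_power_def power2_eq_square field_simps)
  finally show ?thesis .
qed

lemma omega_ray_meets_vertical_line_iff:
  assumes "0 < r"
  shows "geo_ray (exp (2 * pi * \<i> / 3)) r \<inter> vertical_line k \<noteq> {} \<longleftrightarrow> -1/2 \<le> k \<and> k < r"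
  unfolding exp_two_pi_i_div_three
  using assms geo_ray_meets_vertical_line_iff[of "Complex (-1/2) (sqrt 3 / 2)" r k] by simp

lemma omega_ray_meets_semicircle_iff:
  assumes "0 < r" and "a < b" and "b - a \<le> 1"
  shows "geo_ray (exp (2 * pi * \<i> / 3)) r \<inter> semicircle a b \<noteq> {} \<longleftrightarrow> a < r \<and> r < b"
proof -
  have "0 < circle_power a b (Complex (-1/2) (sqrt 3 / 2))"
    using assms(2,3) by (intro circle_power_omega_pos) simp
  then have "geo_ray (exp (2 * pi * \<i> / 3)) r \<inter> semicircle a b \<noteq> {} \<longleftrightarrow> (r - a) * (r - b) < 0"
    unfolding exp_two_pi_i_div_three using assms(1) geo_ray_meets_semicircle_iff by simp
  also have "\<dots> \<longleftrightarrow> a < r \<and> r < b"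
    using assms(2) by (auto simp: mult_less_0_iff)
  finally show ?thesis .
qed

lemma farey_line_vertical_left: "farey_line m 0 p q = vertical_line (of_int p / of_int q)"
  by (simp add: farey_line_def vertical_line_def)

lemma farey_line_vertical_right: "n \<noteq> 0 \<Longrightarrow> farey_line m n p 0 = vertical_line (of_int m / of_int n)"
  by (simp add: farey_line_def vertical_line_def)

lemma farey_line_semicircle:
  assumes "n \<noteq> 0" and "q \<noteq> 0"
  shows "farey_line m n p q = semicircle (of_int m / of_int n) (of_int p / of_int q)"
proof -
  have on_circle: "cmod (w - of_real ((a + b) / 2)) = \<bar>a - b\<bar> / 2 \<longleftrightarrow> circle_power a b w = 0"
    for w :: complex and a b :: real
  proof -
    have equiv: "cmod (w - of_real ((a + b) / 2)) = \<bar>a - b\<bar> / 2 \<longleftrightarrow>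
          (cmod (w - of_real ((a + b) / 2)))\<^sup>2 = (\<bar>a - b\<bar> / 2)\<^sup>2"
      by (rule power2_eq_iff_nonneg[symmetric]) simp_all
    have "(cmod (w - of_real ((a + b) / 2)))\<^sup>2 - (\<bar>a - b\<bar> / 2)\<^sup>2 = circle_power a b w"
      unfolding cmod_power2 circle_power_def by (simp add: power2_eq_square field_simps)
    then show ?thesis using equiv by linarith
  qed
  then show ?thesis using assms unfolding farey_line_def semicircle_def on_circle by simp
qed

lemma semicircle_commute: "semicircle a b = semicircle b a"
  by (simp add: semicircle_def circle_power_def mult.commute)

text \<open>A Farey line with endpoints u1/u2 < v1/v2, both with nonnegative denominator, so that
  \<open>\<infinity> = 1/0\<close> can only occur as the right endpoint.\<close>
definition oriented_farey_pairs :: "((int \<times> int) \<times> (int \<times> int)) set" where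
  "oriented_farey_pairs = {((u1, u2), (v1, v2)). 0 < u2 \<and> 0 \<le> v2 \<and> u1 * v2 - u2 * v1 = -1}"

definition farey_line_of :: "(int \<times> int) \<times> (int \<times> int) \<Rightarrow> complex set" where
  "farey_line_of = (\<lambda>((u1, u2), (v1, v2)). farey_line u1 u2 v1 v2)"

lemma oriented_farey_pair_vertical:
  assumes "((u1, u2), (v1, v2)) \<in> oriented_farey_pairs" and "v2 = 0"
  shows "u2 = 1" and "v1 = 1" and "farey_line u1 u2 v1 v2 = vertical_line (of_int u1)"
proof -
  show "u2 = 1" "v1 = 1"
    using assms by (auto simp: oriented_farey_pairs_def zmult_eq_1_iff)
  then show "farey_line u1 u2 v1 v2 = vertical_line (of_int u1)"
    using assms(2) by (simp add: farey_line_vertical_right)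
qed

lemma oriented_farey_pair_semicircle:
  fixes u1 u2 v1 v2 :: int
  defines "a \<equiv> of_int u1 / of_int u2 :: real" and "b \<equiv> of_int v1 / of_int v2 :: real"
  assumes "((u1, u2), (v1, v2)) \<in> oriented_farey_pairs" and "v2 \<noteq> 0"
  shows "0 < v2" and "b - a = 1 / (of_int u2 * of_int v2)" and "a < b"
    and "farey_line u1 u2 v1 v2 = semicircle a b"
proof -
  have pos: "0 < u2" "0 < v2" and det: "u1 * v2 - u2 * v1 = -1"
    using assms(3,4) by (auto simp: oriented_farey_pairs_def)
  then show "0 < v2" by simp
  have "u2 * v1 - u1 * v2 = 1" using det by linarith
  then have "real_of_int (u2 * v1 - u1 * v2) = 1" by (metis of_int_1)
  then show width: "b - a = 1 / (of_int u2 * of_int v2)"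
    using pos by (simp add: a_def b_def field_simps)
  moreover have "0 < 1 / (of_int u2 * of_int v2 :: real)" using pos by simp
  ultimately show "a < b" by linarith
  show "farey_line u1 u2 v1 v2 = semicircle a b"
    using pos by (simp add: a_def b_def farey_line_semicircle)
qed

lemma farey_semicircle_in_oriented_image:
  assumes "n \<noteq> 0" and "q \<noteq> 0" and "\<bar>m * q - n * p\<bar> = 1"
  shows "farey_line m n p q \<in> farey_line_of ` oriented_farey_pairs"
proof -
  define u1 u2 v1 v2 where "u1 = sgn n * m" and "u2 = \<bar>n\<bar>" and "v1 = sgn q * p" and "v2 = \<bar>q\<bar>"
  have "of_int u1 / of_int u2 = (of_int m / of_int n :: real)"
    and "of_int v1 / of_int v2 = (of_int p / of_int q :: real)"
    using assms(1,2) by (auto simp: u1_def u2_def v1_def v2_def sgn_if)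
  then have L: "farey_line m n p q = semicircle (of_int u1 / of_int u2) (of_int v1 / of_int v2)"
    using assms(1,2) by (simp add: farey_line_semicircle)
  have "u1 * v2 - u2 * v1 = sgn n * sgn q * (m * q - n * p)"
    by (simp add: u1_def u2_def v1_def v2_def abs_sgn algebra_simps)
  then have "\<bar>u1 * v2 - u2 * v1\<bar> = 1"
    using assms by (simp add: abs_mult abs_sgn_eq)
  then consider "u1 * v2 - u2 * v1 = -1" | "v1 * u2 - v2 * u1 = -1"
    by (auto simp: abs_if algebra_simps split: if_splits)
  then show ?thesis
  proof cases
    case 1
    then have "((u1, u2), (v1, v2)) \<in> oriented_farey_pairs"
      using assms(1,2) by (simp add: oriented_farey_pairs_def u2_def v2_def)
    moreover have "farey_line_of ((u1, u2), (v1, v2)) = farey_line m n p q"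
      using assms(1,2) by (simp add: L farey_line_of_def farey_line_semicircle u2_def v2_def)
    ultimately show ?thesis by blast
  next
    case 2
    then have "((v1, v2), (u1, u2)) \<in> oriented_farey_pairs"
      using assms(1,2) by (simp add: oriented_farey_pairs_def u2_def v2_def)
    moreover have "farey_line_of ((v1, v2), (u1, u2)) = farey_line m n p q"
      using assms(1,2) semicircle_commute
      by (simp add: L farey_line_of_def farey_line_semicircle u2_def v2_def)
    ultimately show ?thesis by blast
  qed
qed

lemma farey_lines_eq_image: "farey_lines = farey_line_of ` oriented_farey_pairs"
proof
  show "farey_line_of ` oriented_farey_pairs \<subseteq> farey_lines"
    by (force simp: oriented_farey_pairs_def farey_line_of_def farey_lines_def)
  show "farey_lines \<subseteq> farey_line_of ` oriented_farey_pairs"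
  proof
    fix L assume "L \<in> farey_lines"
    then obtain m n p q where L: "L = farey_line m n p q" and det: "\<bar>m * q - n * p\<bar> = 1"
      by (auto simp: farey_lines_def)
    have vertical: "vertical_line (of_int k) \<in> farey_line_of ` oriented_farey_pairs" for k
    proof (rule image_eqI)
      show "((k, 1), (1, 0)) \<in> oriented_farey_pairs" by (simp add: oriented_farey_pairs_def)
    qed (simp add: farey_line_of_def farey_line_vertical_right)
    consider "n = 0" | "n \<noteq> 0" "q = 0" | "n \<noteq> 0" "q \<noteq> 0" by blast
    then show "L \<in> farey_line_of ` oriented_farey_pairs"
    proof cases
      case 1
      then have "\<bar>q\<bar> = 1" using det abs_zmult_eq_1[of q m] by (simp add: mult.commute)
      then have "of_int p / of_int q = (of_int (p * q) :: real)" by (auto simp: abs_if split: if_splits)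
      then show ?thesis using 1 vertical[of "p * q"] by (simp add: L farey_line_vertical_left)
    next
      case 2
      then have "\<bar>n\<bar> = 1" using det abs_zmult_eq_1[of n p] by simp
      then have "of_int m / of_int n = (of_int (m * n) :: real)" by (auto simp: abs_if split: if_splits)
      then show ?thesis using 2 vertical[of "m * n"] by (simp add: L farey_line_vertical_right)
    next
      case 3
      then show ?thesis using det by (simp add: L farey_semicircle_in_oriented_image)
    qed
  qed
qed

lemma coprime_of_farey_det:
  fixes u1 u2 v1 v2 :: int
  assumes "u1 * v2 - u2 * v1 = -1"
  shows "coprime u1 u2" and "coprime v1 v2"
proof -
  have "is_unit d" if "d dvd u1 * v2 - u2 * v1" for d
    using that assms by simp
  then show "coprime u1 u2" "coprime v1 v2"
    by (auto intro!: coprimeI dvd_diff dvd_mult2 dvd_mult)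
qed

lemma coprime_fraction_eq:
  fixes a b c d :: int
  assumes "coprime a b" "coprime c d" "0 < b" "0 < d"
    and "of_int a / of_int b = (of_int c / of_int d :: real)"
  shows "a = c \<and> b = d"
proof -
  have "of_int (a * d) = (of_int (c * b) :: real)"
    using assms(3-5) by (simp add: field_simps)
  then have cross: "a * d = c * b" by (simp only: of_int_eq_iff)
  then have "\<bar>a\<bar> * \<bar>d\<bar> = \<bar>c\<bar> * \<bar>b\<bar>" by (simp add: abs_mult[symmetric])
  then have "\<bar>d\<bar> = \<bar>b\<bar>" using coprime_crossproduct_int[OF assms(1,2)] by simp
  then show ?thesis using cross assms(3,4) by simp
qed

lemma inj_on_farey_line_of: "inj_on farey_line_of oriented_farey_pairs"
proof (rule inj_onI)
  fix x y
  assume x: "x \<in> oriented_farey_pairs" and y: "y \<in> oriented_farey_pairs"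
    and eq: "farey_line_of x = farey_line_of y"
  obtain u1 u2 v1 v2 u1' u2' v1' v2' where
    xy: "x = ((u1, u2), (v1, v2))" "y = ((u1', u2'), (v1', v2'))"
    by (metis prod.exhaust)
  note x = x[unfolded xy] and y = y[unfolded xy]
  have Re_eq: "Re ` farey_line u1 u2 v1 v2 = Re ` farey_line u1' u2' v1' v2'"
    using eq by (simp add: xy farey_line_of_def)
  have finite_Re: "finite (Re ` farey_line u1 u2 v1 v2) \<longleftrightarrow> v2 = 0"
    if "((u1, u2), (v1, v2)) \<in> oriented_farey_pairs" for u1 u2 v1 v2
    using that oriented_farey_pair_vertical[OF that] oriented_farey_pair_semicircle[OF that]
    by (cases "v2 = 0") (simp_all add: Re_vertical_line Re_semicircle)
  show "x = y"
  proof (cases "v2 = 0")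
    case True
    then have "v2' = 0" using finite_Re[OF x] finite_Re[OF y] Re_eq by simp
    then show ?thesis
      using True Re_eq oriented_farey_pair_vertical[OF x] oriented_farey_pair_vertical[OF y]
      by (simp add: xy Re_vertical_line)
  next
    case False
    then have "v2' \<noteq> 0" using finite_Re[OF x] finite_Re[OF y] Re_eq by simp
    note sx = oriented_farey_pair_semicircle[OF x False]
      and sy = oriented_farey_pair_semicircle[OF y this]
    have "{of_int u1 / of_int u2 <..< of_int v1 / of_int v2} =
          {of_int u1' / of_int u2' <..< (of_int v1' / of_int v2' :: real)}"
      using Re_eq sx sy by (simp add: Re_semicircle)
    then have "of_int u1 / of_int u2 = (of_int u1' / of_int u2' :: real)"
      and "of_int v1 / of_int v2 = (of_int v1' / of_int v2' :: real)"
      using sx(3) sy(3) greaterThanLessThan_subseteq_greaterThanLessThan by (metis order.antisym order.refl)+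
    moreover have "0 < u2" "0 < u2'" "u1 * v2 - u2 * v1 = -1" "u1' * v2' - u2' * v1' = -1"
      using x y by (simp_all add: oriented_farey_pairs_def)
    ultimately show ?thesis
      using sx(1) sy(1) coprime_fraction_eq coprime_of_farey_det by (metis xy)
  qed
qed

definition farey_brackets :: "int \<Rightarrow> int \<Rightarrow> ((int \<times> int) \<times> (int \<times> int)) set" where
  "farey_brackets p q = {((u1, u2), (v1, v2)).
     0 \<le> u1 \<and> 0 \<le> u2 \<and> 0 \<le> v1 \<and> 0 \<le> v2 \<and> u1 * v2 - u2 * v1 = -1 \<and> u1 * q < p * u2 \<and> p * v2 < v1 * q}"

lemma of_int_fraction_less_iff:
  fixes a b c d :: int
  assumes "0 < b" and "0 < d"
  shows "of_int a / of_int b < (of_int c / of_int d :: real) \<longleftrightarrow> a * d < c * b"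
proof -
  have "of_int a / of_int b < (of_int c / of_int d :: real) \<longleftrightarrow> of_int a * of_int d < (of_int c * of_int b :: real)"
    using assms by (simp add: field_simps)
  then show ?thesis by (metis of_int_less_iff of_int_mult)
qed

lemma farey_brackets_iff_between:
  assumes "0 < p" and "0 < q" and x: "((u1, u2), (v1, v2)) \<in> oriented_farey_pairs" and "v2 \<noteq> 0"
  shows "((u1, u2), (v1, v2)) \<in> farey_brackets p q \<longleftrightarrow> u1 * q < p * u2 \<and> p * v2 < v1 * q"
proof
  have u2: "0 < u2" and v2: "0 < v2" and det: "u1 * v2 - u2 * v1 = -1"
    using x assms(4) by (auto simp: oriented_farey_pairs_def)
  assume between: "u1 * q < p * u2 \<and> p * v2 < v1 * q"
  have "0 < p * v2" using assms(1) v2 by simp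
  then have "0 < v1 * q" using between by linarith
  then have v1: "0 < v1" using assms(2) by (simp add: zero_less_mult_iff)
  then have "0 < u2 * v1" using u2 by simp
  then have "0 \<le> u1 * v2" using det by linarith
  then have "0 \<le> u1" using v2 by (simp add: zero_le_mult_iff)
  then show "((u1, u2), (v1, v2)) \<in> farey_brackets p q"
    using between det u2 v1 v2 by (simp add: farey_brackets_def)
qed (simp add: farey_brackets_def)

lemma farey_line_meets_omega_ray_iff:
  assumes "0 < p" and "0 < q" and x: "((u1, u2), (v1, v2)) \<in> oriented_farey_pairs"
  shows "farey_line u1 u2 v1 v2 \<inter> geo_ray (exp (2 * pi * \<i> / 3)) (of_int p / of_int q) \<noteq> {}
           \<longleftrightarrow> ((u1, u2), (v1, v2)) \<in> farey_brackets p q"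
proof -
  define r where "r = (of_int p / of_int q :: real)"
  have r: "0 < r" using assms by (simp add: r_def)
  show ?thesis
  proof (cases "v2 = 0")
    case True
    note vertical = oriented_farey_pair_vertical[OF x True]
    have "-1/2 \<le> (of_int u1 :: real) \<longleftrightarrow> 0 \<le> u1"
    proof (cases "0 \<le> u1")
      case False
      then have "(of_int u1 :: real) \<le> -1" by linarith
      then show ?thesis using False by simp
    qed simp
    moreover have "of_int u1 / of_int 1 < r \<longleftrightarrow> u1 * q < p"
      unfolding r_def using assms by (subst of_int_fraction_less_iff) simp_all
    ultimately show ?thesis
      using omega_ray_meets_vertical_line_iff[OF r] True vertical assms(2)
      by (auto simp: r_def farey_brackets_def Int_commute)
  next
    case False
    define a where "a = (of_int u1 / of_int u2 :: real)"
    define b where "b = (of_int v1 / of_int v2 :: real)"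
    note semicircle = oriented_farey_pair_semicircle[OF x False, folded a_def b_def]
    have u2: "0 < u2" using x by (simp add: oriented_farey_pairs_def)
    then have "1 \<le> of_int u2 * (of_int v2 :: real)"
      using semicircle(1) by (metis int_one_le_iff_zero_less of_int_1_le_iff of_int_mult zero_less_mult_iff)
    then have "b - a \<le> 1" using semicircle(2) by simp
    then have "farey_line u1 u2 v1 v2 \<inter> geo_ray (exp (2 * pi * \<i> / 3)) r \<noteq> {} \<longleftrightarrow> a < r \<and> r < b"
      using omega_ray_meets_semicircle_iff[OF r semicircle(3)] semicircle(4) by (simp add: Int_commute)
    also have "\<dots> \<longleftrightarrow> u1 * q < p * u2 \<and> p * v2 < v1 * q"
      using assms u2 semicircle(1) by (simp add: a_def b_def r_def of_int_fraction_less_iff)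
    also have "\<dots> \<longleftrightarrow> ((u1, u2), (v1, v2)) \<in> farey_brackets p q"
      using farey_brackets_iff_between[OF assms False] by simp
    finally show ?thesis by (simp add: r_def)
  qed
qed

lemma farey_brackets_eq:
  assumes "0 < p" and "0 < q"
  shows "farey_brackets p q = {x \<in> oriented_farey_pairs.
           farey_line_of x \<inter> geo_ray (exp (2 * pi * \<i> / 3)) (of_int p / of_int q) \<noteq> {}}"
proof -
  have sub: "farey_brackets p q \<subseteq> oriented_farey_pairs"
  proof (clarsimp simp: farey_brackets_def oriented_farey_pairs_def)
    fix u1 u2 :: int
    assume "0 \<le> u1" and "u1 * q < p * u2"
    moreover have "0 \<le> u1 * q" using \<open>0 \<le> u1\<close> assms(2) by simp
    ultimately have "0 < p * u2" by linarith
    then show "0 < u2" using assms(1) by (simp add: zero_less_mult_iff)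
  qed
  show ?thesis
  proof (rule set_eqI)
    fix x :: "(int \<times> int) \<times> (int \<times> int)"
    obtain u1 u2 v1 v2 where "x = ((u1, u2), (v1, v2))" by (metis prod.exhaust)
    then show "x \<in> farey_brackets p q \<longleftrightarrow> x \<in> {x \<in> oriented_farey_pairs.
           farey_line_of x \<inter> geo_ray (exp (2 * pi * \<i> / 3)) (of_int p / of_int q) \<noteq> {}}"
      using sub farey_line_meets_omega_ray_iff[OF assms, of u1 u2 v1 v2]
      by (auto simp: farey_line_of_def)
  qed
qed

lemma nonneg_farey_pair_cases:
  fixes u1 u2 v1 v2 :: int
  assumes "0 \<le> u1" "0 \<le> u2" "0 \<le> v1" "0 \<le> v2" and det: "u1 * v2 - u2 * v1 = -1"
  shows "(u1 = 0 \<and> u2 = 1 \<and> v1 = 1 \<and> v2 = 0) \<or> (u2 \<le> u1 \<and> v2 \<le> v1) \<or> (u1 \<le> u2 \<and> v1 \<le> v2)"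
proof (rule ccontr)
  assume "\<not> ?thesis"
  then consider "u1 < u2" "v2 < v1" "\<not> (u1 = 0 \<and> u2 = 1 \<and> v1 = 1 \<and> v2 = 0)" | "u2 < u1" "v1 < v2"
    by linarith
  then show False
  proof cases
    case 1
    have "(v1 - v2) * u1 + (u2 - u1) * v1 = 1" using det by (simp add: algebra_simps)
    moreover have "0 \<le> (v1 - v2) * u1" "v1 \<le> (u2 - u1) * v1" "1 \<le> v1" using 1 assms by simp_all
    ultimately have "(v1 - v2) * u1 = 0" and "(u2 - u1) * v1 = 1" by linarith+
    then have "u1 = 0" "u2 = 1" "v1 = 1" using 1 assms by (auto simp: zmult_eq_1_iff)
    then show False using 1 assms(4) by simp
  next
    case 2
    have "(v1 - v2) * u1 + (u2 - u1) * v1 = 1" using det by (simp add: algebra_simps)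
    moreover have "(v1 - v2) * u1 \<le> 0" "(u2 - u1) * v1 \<le> 0"
      using 2 assms by (simp_all add: mult_nonpos_nonneg)
    ultimately show False by linarith
  qed
qed

text \<open>The endpoint maps \<open>x \<mapsto> x + 1\<close> and \<open>x \<mapsto> x / (x + 1)\<close>, inverting one subtraction of
  the Euclidean algorithm.\<close>
definition shift_bracket :: "(int \<times> int) \<times> (int \<times> int) \<Rightarrow> (int \<times> int) \<times> (int \<times> int)" where
  "shift_bracket = (\<lambda>((u1, u2), (v1, v2)). ((u1 + u2, u2), (v1 + v2, v2)))"

definition shrink_bracket :: "(int \<times> int) \<times> (int \<times> int) \<Rightarrow> (int \<times> int) \<times> (int \<times> int)" where
  "shrink_bracket = (\<lambda>((u1, u2), (v1, v2)). ((u1, u1 + u2), (v1, v1 + v2)))"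

lemma farey_brackets_shift:
  assumes "0 < q" and "q \<le> p"
  shows "farey_brackets p q = insert ((0, 1), (1, 0)) (shift_bracket ` farey_brackets (p - q) q)"
proof (intro equalityI subsetI)
  fix x assume x: "x \<in> farey_brackets p q"
  obtain u1 u2 v1 v2 where x_eq: "x = ((u1, u2), (v1, v2))" by (metis prod.exhaust)
  have c: "0 \<le> u1" "0 \<le> u2" "0 \<le> v1" "0 \<le> v2" "u1 * v2 - u2 * v1 = -1"
      "u1 * q < p * u2" "p * v2 < v1 * q"
    using x by (simp_all add: x_eq farey_brackets_def)
  show "x \<in> insert ((0, 1), (1, 0)) (shift_bracket ` farey_brackets (p - q) q)"
  proof (cases "x = ((0, 1), (1, 0))")
    case False
    have "\<not> (v1 \<le> v2)"
    proof
      assume "v1 \<le> v2"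
      then have "v1 * q \<le> v2 * q" using assms(1) by simp
      moreover have "v2 * q \<le> p * v2" using assms(2) c(4) by (metis mult.commute mult_left_mono)
      ultimately show False using c(7) by linarith
    qed
    then have "u2 \<le> u1" "v2 \<le> v1" using nonneg_farey_pair_cases[OF c(1-5)] False x_eq by auto
    then have "((u1 - u2, u2), (v1 - v2, v2)) \<in> farey_brackets (p - q) q"
      using c by (simp add: farey_brackets_def algebra_simps)
    moreover have "x = shift_bracket ((u1 - u2, u2), (v1 - v2, v2))"
      by (simp add: x_eq shift_bracket_def)
    ultimately show ?thesis by blast
  qed simp
next
  fix x assume "x \<in> insert ((0, 1), (1, 0)) (shift_bracket ` farey_brackets (p - q) q)"
  then show "x \<in> farey_brackets p q"
    using assms by (auto simp: farey_brackets_def shift_bracket_def algebra_simps)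
qed

lemma farey_brackets_shrink:
  assumes "0 < p" and "p \<le> q"
  shows "farey_brackets p q = insert ((0, 1), (1, 0)) (shrink_bracket ` farey_brackets p (q - p))"
proof (intro equalityI subsetI)
  fix x assume x: "x \<in> farey_brackets p q"
  obtain u1 u2 v1 v2 where x_eq: "x = ((u1, u2), (v1, v2))" by (metis prod.exhaust)
  have c: "0 \<le> u1" "0 \<le> u2" "0 \<le> v1" "0 \<le> v2" "u1 * v2 - u2 * v1 = -1"
      "u1 * q < p * u2" "p * v2 < v1 * q"
    using x by (simp_all add: x_eq farey_brackets_def)
  show "x \<in> insert ((0, 1), (1, 0)) (shrink_bracket ` farey_brackets p (q - p))"
  proof (cases "x = ((0, 1), (1, 0))")
    case False
    have "\<not> (u2 \<le> u1)"
    proof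
      assume "u2 \<le> u1"
      then have "q * u2 \<le> q * u1" using assms by simp
      moreover have "p * u2 \<le> q * u2" using assms(2) c(2) by (simp add: mult_right_mono)
      ultimately show False using c(6) mult.commute[of u1 q] by linarith
    qed
    then have "u1 \<le> u2" "v1 \<le> v2" using nonneg_farey_pair_cases[OF c(1-5)] False x_eq by auto
    then have "((u1, u2 - u1), (v1, v2 - v1)) \<in> farey_brackets p (q - p)"
      using c by (simp add: farey_brackets_def algebra_simps)
    moreover have "x = shrink_bracket ((u1, u2 - u1), (v1, v2 - v1))"
      by (simp add: x_eq shrink_bracket_def)
    ultimately show ?thesis by blast
  qed simp
next
  fix x assume "x \<in> insert ((0, 1), (1, 0)) (shrink_bracket ` farey_brackets p (q - p))"
  then show "x \<in> farey_brackets p q"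
    using assms by (auto simp: farey_brackets_def shrink_bracket_def algebra_simps)
qed

lemma card_farey_brackets: "card (farey_brackets (int p) (int q)) = euclid_sub p q"
proof -
  have base_new: "((0, 1), (1, 0)) \<notin> shift_bracket ` farey_brackets a b"
    "((0, 1), (1, 0)) \<notin> shrink_bracket ` farey_brackets a b" for a b
    by (auto simp: farey_brackets_def shift_bracket_def shrink_bracket_def)
  have inj: "inj shift_bracket" "inj shrink_bracket"
    by (auto simp: inj_def shift_bracket_def shrink_bracket_def)
  have "finite (farey_brackets (int p) (int q)) \<and> card (farey_brackets (int p) (int q)) = euclid_sub p q"
  proof (induction p q rule: euclid_sub.induct)
    case (1 p q)
    consider "p = 0 \<or> q = 0" | "0 < q" "q \<le> p" | "0 < p" "p < q" by linarith
    then show ?case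
    proof cases
      case 1
      then have "farey_brackets (int p) (int q) = {}"
        by (auto simp: farey_brackets_def mult_less_0_iff)
      then show ?thesis using 1 by simp
    next
      case 2
      then have "farey_brackets (int p) (int q) =
          insert ((0, 1), (1, 0)) (shift_bracket ` farey_brackets (int (p - q)) (int q))"
        by (simp add: farey_brackets_shift of_nat_diff)
      then show ?thesis using "1.IH"(1) 2 base_new inj
        by (simp add: card_image inj_on_subset)
    next
      case 3
      then have "farey_brackets (int p) (int q) =
          insert ((0, 1), (1, 0)) (shrink_bracket ` farey_brackets (int p) (int (q - p)))"
        by (simp add: farey_brackets_shrink of_nat_diff)
      then show ?thesis using "1.IH"(2) 3 base_new inj
        by (simp add: card_image inj_on_subset)
    qed
  qed
  then show ?thesis ..
qed

theorem lemma12: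
  fixes p q :: nat
  assumes "0 < p" and "0 < q" and "coprime p q"
  shows "euclid_sub p q = d_c (exp (2 * pi * \<i> / 3)) (real p / real q)"
proof -
  let ?ray = "geo_ray (exp (2 * pi * \<i> / 3)) (real p / real q)"
  have "{L \<in> farey_lines. L \<inter> ?ray \<noteq> {}} =
        farey_line_of ` {x \<in> oriented_farey_pairs. farey_line_of x \<inter> ?ray \<noteq> {}}"
    unfolding farey_lines_eq_image by blast
  also have "\<dots> = farey_line_of ` farey_brackets (int p) (int q)"
    using farey_brackets_eq[of "int p" "int q"] assms(1,2) by simp
  finally have "d_c (exp (2 * pi * \<i> / 3)) (real p / real q) =
      card (farey_line_of ` farey_brackets (int p) (int q))"
    by (simp add: d_c_def)
  also have "\<dots> = card (farey_brackets (int p) (int q))"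
    using farey_brackets_eq[of "int p" "int q"] assms(1,2)
    by (intro card_image inj_on_subset[OF inj_on_farey_line_of]) auto
  also have "\<dots> = euclid_sub p q" by (rule card_farey_brackets)
  finally show ?thesis by simp
qed

end
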